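(* Fix $\delta>0$. Let (R) be the problem: maximize over $\{\mathbf Q_g\}\in\mathcal Q$ and $s\in[0,1]^{\mathcal K}$ the function $$F(\{\mathbf Q_g\},s)=\min_{g}\Big\{\frac{\sum_{k\in\mathcal K_g}s_k}{\tau_g|\mathcal K_g|}\min_{k\in\mathcal K_g}\big[r_k(\{\mathbf Q_\ell\})+\delta^{-1}(1-s_k)\big]\Big\},$$ which is equivalent to the epigraph problem: maximize $\alpha$ subject to $R_g\sum_{k\in\mathcal K_g}s_k\ge\tau_g|\mathcal K_g|\alpha^2$, $r_k(\{\mathbf Q_\ell\})+\delta^{-1}(1-s_k)\ge R_g$ for $k\in\mathcal K_g$, $0\le s_k\le1$, $\{\mathbf Q_g\}\in\mathcal Q$. Consider the iterative algorithm: start from any $\{\tilde{\mathbf Q}_\ell\}\in\mathcal Q$; at each iteration solve the convex problem maximize $\alpha$ over $\{\mathbf Q_g\},\{R_g\},\{s_k\},\alpha$ subject to $\begin{pmatrix}R_g&\alpha\sqrt{\tau_g|\mathcal K_g|}\\ \alpha\sqrt{\tau_g|\mathcal K_g|}&\sum_{k\in\mathcal K_g}s_k\end{pmatrix}\succeq\mathbf 0$ for all $g$, $\bar r_k(\{\mathbf Q_\ell\}\mid\{\tilde{\mathbf Q}_\ell\})+\delta^{-1}(1-s_k)\ge R_g$ for all $k\in\mathcal K_g$ and all $g$, $0\le s_k\le 1$, $\{\mathbf Q_g\}\in\mathcal Q$; then set $\tilde{\mathbf Q}_\ell$ equal to the obtained $\mathbf Q_\ell$ and repeat. Then every limit point of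 the sequence of iterates $(\{\mathbf Q_g\},\{s_k\})$ (together with the corresponding $\{R_g\},\alpha$) generated by this algorithm is a stationary point of (R).
   Context: Setting and notation as follows. $B$ BSs with $M$ antennas, powers $P_b\ge0$; users $\mathcal K$ partitioned into groups $\mathcal K_1,\dots,\mathcal K_G$; $\mathcal B_g$ the BSs serving group $g$; weights $\tau_g>0$; channels $\mathbf h_{b,k}\in\mathbb C^M$, $\mathbf h_k=[\mathbf h_{1,k}^H,\dots,\mathbf h_{B,k}^H]^H$; $\{\mathbf Q\}_{b,b'}$ the $(b,b')$-th $M\times M$ block. $\mathcal Q$: tuples of Hermitian PSD $MB\times MB$ matrices $(\mathbf Q_1,\dots,\mathbf Q_G)$ with $\sum_g\mathrm{tr}(\{\mathbf Q_g\}_{b,b})\le P_b$ for all $b$ and $\{\mathbf Q_g\}_{b,b'}=\mathbf 0$ if $b\notin\mathcal B_g$ or $b'\notin\mathcal B_g$. For $k\in\mathcal K_g$, $r_k(\{\mathbf Q_\ell\})=\log_2\big(1+\frac{\mathrm{tr}(\mathbf Q_g\mathbf h_k\mathbf h_k^H)}{\sum_{\ell\neq g}\mathrm{tr}(\mathbf Q_\ell\mathbf h_k\mathbf h_k^H)+1}\big)$ and $\bar r_k(\{\mathbf Q_\ell\}\mid\{\tilde{\mathbf Q}_\ell\})=\log_2\big(1+\sum_{\ell=1}^G\mathrm{tr}(\mathbf Q_\ell\mathbf h_k\mathbf h_k^H)\big)-\log_2\big(1+\sum_{\ell\ne g}\mathrm{tr}(\tilde{\mathbf Q}_\ell\mathbf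 h_k\mathbf h_k^H)\big)-\frac{\sum_{\ell\ne g}\mathrm{tr}((\mathbf Q_\ell-\tilde{\mathbf Q}_\ell)\mathbf h_k\mathbf h_k^H)}{[1+\sum_{\ell\ne g}\mathrm{tr}(\tilde{\mathbf Q}_\ell\mathbf h_k\mathbf h_k^H)]\ln 2}$. A stationary point of a maximization problem over a convex feasible set is a feasible point at which the directional derivative of the objective along every feasible direction is nonpositive. *)

theory Defs
  imports "HOL-Analysis.Analysis"
begin

text \<open>An MB x MB complex matrix is represented as a function on index pairs (b,i),
  b < B (base station), i < M (antenna); only entries on idx B M are meaningful.
  A stacked channel vector h_k is a function (b,i) |-> i-th entry of h_{b,k}.\<close>

type_synonym cmat = "nat \<times> nat \<Rightarrow> nat \<times> nat \<Rightarrow> complex"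
type_synonym cvec = "nat \<times> nat \<Rightarrow> complex"

definition idx :: "nat \<Rightarrow> nat \<Rightarrow> (nat \<times> nat) set" where
  "idx B M = {0..<B} \<times> {0..<M}"

definition herm_psd :: "nat \<Rightarrow> nat \<Rightarrow> cmat \<Rightarrow> bool" where
  "herm_psd B M A \<longleftrightarrow>
     (\<forall>x\<in>idx B M. \<forall>y\<in>idx B M. A y x = cnj (A x y)) \<and>
     (\<forall>v::cvec. 0 \<le> Re (\<Sum>x\<in>idx B M. \<Sum>y\<in>idx B M. cnj (v x) * A x y * v y))"

text \<open>tr(A h h^H) (real part; it is real for Hermitian A).\<close>
definition trhh :: "nat \<Rightarrow> nat \<Rightarrow> cmat \<Rightarrow> cvec \<Rightarrow> real" where
  "trhh B M A h = Re (\<Sum>x\<in>idx B M. \<Sum>y\<in>idx B M. A x y * (h y * cnj (h x)))"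

definition blocktr :: "nat \<Rightarrow> cmat \<Rightarrow> nat \<Rightarrow> real" where
  "blocktr M A b = Re (\<Sum>i<M. A (b,i) (b,i))"

text \<open>The feasible set \<Q> of covariance tuples (Q_0,...,Q_{G-1}); groups are 0..G-1,
  base stations 0..B-1, Bg g is the set of BSs serving group g.\<close>
definition feasQ :: "nat \<Rightarrow> nat \<Rightarrow> nat \<Rightarrow> (nat \<Rightarrow> real) \<Rightarrow> (nat \<Rightarrow> nat set)
    \<Rightarrow> (nat \<Rightarrow> cmat) \<Rightarrow> bool" where
  "feasQ B M G P Bg Q \<longleftrightarrow>
     (\<forall>g<G. herm_psd B M (Q g)) \<and>
     (\<forall>b<B. (\<Sum>g<G. blocktr M (Q g) b) \<le> P b) \<and>
     (\<forall>g<G. \<forall>b<B. \<forall>b'<B. (b \<notin> Bg g \<or> b' \<notin> Bg g) \<longrightarrow>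
        (\<forall>i<M. \<forall>j<M. Q g (b,i) (b',j) = 0))"

definition rate :: "nat \<Rightarrow> nat \<Rightarrow> nat \<Rightarrow> cvec \<Rightarrow> (nat \<Rightarrow> cmat) \<Rightarrow> nat \<Rightarrow> real" where
  "rate B M G hk Q g =
     log 2 (1 + trhh B M (Q g) hk / ((\<Sum>l\<in>{0..<G} - {g}. trhh B M (Q l) hk) + 1))"

definition rate_bar :: "nat \<Rightarrow> nat \<Rightarrow> nat \<Rightarrow> cvec \<Rightarrow> (nat \<Rightarrow> cmat) \<Rightarrow> (nat \<Rightarrow> cmat)
    \<Rightarrow> nat \<Rightarrow> real" where
  "rate_bar B M G hk Q Qt g =
     log 2 (1 + (\<Sum>l<G. trhh B M (Q l) hk))
     - log 2 (1 + (\<Sum>l\<in>{0..<G} - {g}. trhh B M (Qt l) hk))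
     - (\<Sum>l\<in>{0..<G} - {g}. trhh B M (Q l) hk - trhh B M (Qt l) hk)
       / ((1 + (\<Sum>l\<in>{0..<G} - {g}. trhh B M (Qt l) hk)) * ln 2)"

definition objF :: "nat \<Rightarrow> nat \<Rightarrow> nat \<Rightarrow> (nat \<Rightarrow> 'u set) \<Rightarrow> (nat \<Rightarrow> real) \<Rightarrow> real
    \<Rightarrow> ('u \<Rightarrow> cvec) \<Rightarrow> (nat \<Rightarrow> cmat) \<Rightarrow> ('u \<Rightarrow> real) \<Rightarrow> real" where
  "objF B M G Kg \<tau> \<delta> h Q s =
     Min ((\<lambda>g. (\<Sum>k\<in>Kg g. s k) / (\<tau> g * real (card (Kg g)))
               * Min ((\<lambda>k. rate B M G (h k) Q g + (1 - s k) / \<delta>) ` Kg g)) ` {..<G})"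

definition feasR :: "nat \<Rightarrow> nat \<Rightarrow> nat \<Rightarrow> (nat \<Rightarrow> real) \<Rightarrow> (nat \<Rightarrow> nat set) \<Rightarrow> 'u set
    \<Rightarrow> (nat \<Rightarrow> cmat) \<Rightarrow> ('u \<Rightarrow> real) \<Rightarrow> bool" where
  "feasR B M G P Bg K Q s \<longleftrightarrow> feasQ B M G P Bg Q \<and> (\<forall>k\<in>K. 0 \<le> s k \<and> s k \<le> 1)"

definition stationaryR :: "nat \<Rightarrow> nat \<Rightarrow> nat \<Rightarrow> (nat \<Rightarrow> real) \<Rightarrow> (nat \<Rightarrow> nat set)
    \<Rightarrow> (nat \<Rightarrow> 'u set) \<Rightarrow> (nat \<Rightarrow> real) \<Rightarrow> real \<Rightarrow> ('u \<Rightarrow> cvec)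
    \<Rightarrow> (nat \<Rightarrow> cmat) \<Rightarrow> ('u \<Rightarrow> real) \<Rightarrow> bool" where
  "stationaryR B M G P Bg Kg \<tau> \<delta> h Q s \<longleftrightarrow>
     feasR B M G P Bg (\<Union>g<G. Kg g) Q s \<and>
     (\<forall>Q' s'. feasR B M G P Bg (\<Union>g<G. Kg g) Q' s' \<longrightarrow>
        (\<exists>D. ((\<lambda>t. (objF B M G Kg \<tau> \<delta> h
                    (\<lambda>g x y. Q g x y + complex_of_real t * (Q' g x y - Q g x y))
                    (\<lambda>k. s k + t * (s' k - s k))
                  - objF B M G Kg \<tau> \<delta> h Q s) / t) \<longlongrightarrow> D) (at_right 0)
             \<and> D \<le> 0))"

text \<open>The 2x2 real symmetric LMI is written
  via its defining quadratic form.\<close>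
definition feasSub :: "nat \<Rightarrow> nat \<Rightarrow> nat \<Rightarrow> (nat \<Rightarrow> real) \<Rightarrow> (nat \<Rightarrow> nat set)
    \<Rightarrow> (nat \<Rightarrow> 'u set) \<Rightarrow> (nat \<Rightarrow> real) \<Rightarrow> real \<Rightarrow> ('u \<Rightarrow> cvec) \<Rightarrow> (nat \<Rightarrow> cmat)
    \<Rightarrow> (nat \<Rightarrow> cmat) \<Rightarrow> (nat \<Rightarrow> real) \<Rightarrow> ('u \<Rightarrow> real) \<Rightarrow> real \<Rightarrow> bool" where
  "feasSub B M G P Bg Kg \<tau> \<delta> h Qt Q R s \<alpha> \<longleftrightarrow>
     (\<forall>g<G. \<forall>u v :: real.
        0 \<le> u\<^sup>2 * R g + 2 * u * v * (\<alpha> * sqrt (\<tau> g * real (card (Kg g))))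
             + v\<^sup>2 * (\<Sum>k\<in>Kg g. s k)) \<and>
     (\<forall>g<G. \<forall>k\<in>Kg g. rate_bar B M G (h k) Q Qt g + (1 - s k) / \<delta> \<ge> R g) \<and>
     (\<forall>k\<in>(\<Union>g<G. Kg g). 0 \<le> s k \<and> s k \<le> 1) \<and>
     feasQ B M G P Bg Q"

definition optSub :: "nat \<Rightarrow> nat \<Rightarrow> nat \<Rightarrow> (nat \<Rightarrow> real) \<Rightarrow> (nat \<Rightarrow> nat set)
    \<Rightarrow> (nat \<Rightarrow> 'u set) \<Rightarrow> (nat \<Rightarrow> real) \<Rightarrow> real \<Rightarrow> ('u \<Rightarrow> cvec) \<Rightarrow> (nat \<Rightarrow> cmat)
    \<Rightarrow> (nat \<Rightarrow> cmat) \<Rightarrow> (nat \<Rightarrow> real) \<Rightarrow> ('u \<Rightarrow> real) \<Rightarrow> real \<Rightarrow> bool" where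
  "optSub B M G P Bg Kg \<tau> \<delta> h Qt Q R s \<alpha> \<longleftrightarrow>
     feasSub B M G P Bg Kg \<tau> \<delta> h Qt Q R s \<alpha> \<and>
     (\<forall>Q' R' s' \<alpha>'. feasSub B M G P Bg Kg \<tau> \<delta> h Qt Q' R' s' \<alpha>' \<longrightarrow> \<alpha>' \<le> \<alpha>)"

definition limit_point :: "nat \<Rightarrow> nat \<Rightarrow> nat \<Rightarrow> 'u set \<Rightarrow> (nat \<Rightarrow> nat \<Rightarrow> cmat)
    \<Rightarrow> (nat \<Rightarrow> 'u \<Rightarrow> real) \<Rightarrow> (nat \<Rightarrow> cmat) \<Rightarrow> ('u \<Rightarrow> real) \<Rightarrow> bool" where
  "limit_point B M G K Qs ss Qlim slim \<longleftrightarrow>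
     (\<exists>\<sigma>. strict_mono \<sigma> \<and>
        (\<forall>g<G. \<forall>x\<in>idx B M. \<forall>y\<in>idx B M. (\<lambda>n. Qs (\<sigma> n) g x y) \<longlonglongrightarrow> Qlim g x y) \<and>
        (\<forall>k\<in>K. (\<lambda>n. ss (\<sigma> n) k) \<longlonglongrightarrow> slim k))"

end

theory Submission
  imports Defs
begin

text \<open>
  Each subproblem replaces the interference term log2(1 + I_k) of every rate by its tangent at the
  current iterate Q_n.  By concavity of the logarithm this yields minorants of the rates that are
  exact and tangent at Q_n, and the 2x2 LMI encodes alpha^2 \<le> F(. | Q_n), the objective of (R)
  built from these minorants.  Hence the optimal values alpha_n are nonnegative and nondecreasing,
  alpha_(n+1)^2 \<le> F(Q_(n+1), s_(n+1)), and F(Q', s' | Q_n) \<le> alpha_(n+1)^2 for every feasible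
  (Q', s').  Along a convergent subsequence this gives F(Q', s' | Q*) \<le> F(Q*, s*): the limit
  maximises the surrogate built at itself.  Since the minorants are tangent at Q*, F and F(. | Q*)
  differ by o(t) along feasible segments, so the one-sided directional derivative of F at (Q*, s*),
  which exists because F is a finite minimum of differentiable functions, is nonpositive.
\<close>

section \<open>Elementary real analysis\<close>

lemma differentiable_at_right_min_of_less:
  fixes f g :: "real \<Rightarrow> real"
  assumes f: "f differentiable (at_right x)" and g: "g differentiable (at_right x)" and "f x < g x"
  shows "(\<lambda>t. min (f t) (g t)) differentiable (at_right x)"
proof -
  have "((\<lambda>t. g t - f t) \<longlongrightarrow> g x - f x) (at_right x)"
    using f g by (intro tendsto_diff) (auto dest!: differentiable_imp_continuous_within simp: continuous_within)
  from order_tendstoD(1)[OF this, of 0] have "eventually (\<lambda>t. f t < g t) (at_right x)"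
    using \<open>f x < g x\<close> by simp
  then have "eventually (\<lambda>t. f t = min (f t) (g t)) (at_right x)"
    by eventually_elim simp
  moreover obtain D where "(f has_real_derivative D) (at_right x)"
    using f by (rule real_differentiableE)
  ultimately have "((\<lambda>t. min (f t) (g t)) has_real_derivative D) (at_right x)"
    using has_field_derivative_cong_eventually[of f "\<lambda>t. min (f t) (g t)"] \<open>f x < g x\<close> by simp
  then show ?thesis
    unfolding real_differentiable_def by blast
qed

lemma differentiable_at_right_min:
  fixes f g :: "real \<Rightarrow> real"
  assumes f: "f differentiable (at_right x)" and g: "g differentiable (at_right x)"
  shows "(\<lambda>t. min (f t) (g t)) differentiable (at_right x)"
proof -
  consider "f x < g x" | "g x < f x" | "f x = g x" by linarith
  then show ?thesis
  proof cases
    case 1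
    then show ?thesis by (rule differentiable_at_right_min_of_less[OF f g])
  next
    case 2
    then show ?thesis
      using differentiable_at_right_min_of_less[OF g f] by (simp add: min.commute)
  next
    case 3
    obtain Df Dg where "(f has_real_derivative Df) (at_right x)" "(g has_real_derivative Dg) (at_right x)"
      using f g by (meson real_differentiableE)
    then have "((\<lambda>t. min ((f t - f x) / (t - x)) ((g t - g x) / (t - x))) \<longlongrightarrow> min Df Dg) (at_right x)"
      by (intro tendsto_min) (simp_all add: has_field_derivative_iff)
    moreover have "eventually (\<lambda>t. min ((f t - f x) / (t - x)) ((g t - g x) / (t - x))
        = (min (f t) (g t) - min (f x) (g x)) / (t - x)) (at_right x)"
      using eventually_at_right_less[of x]
    proof eventually_elim
      case (elim t)
      then have "min ((f t - f x) / (t - x)) ((g t - g x) / (t - x)) = min (f t - f x) (g t - g x) / (t - x)"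
        by (simp add: min_divide_distrib_right)
      also have "min (f t - f x) (g t - g x) = min (f t) (g t) - min (f x) (g x)"
        using 3 by (simp add: min_def)
      finally show ?case .
    qed
    ultimately have "((\<lambda>t. (min (f t) (g t) - min (f x) (g x)) / (t - x)) \<longlongrightarrow> min Df Dg) (at_right x)"
      by (rule tendsto_cong[THEN iffD1, rotated])
    then show ?thesis
      unfolding real_differentiable_def has_field_derivative_iff by blast
  qed
qed

lemma differentiable_at_right_Min:
  fixes f :: "real \<Rightarrow> 'a \<Rightarrow> real"
  assumes "finite I" "I \<noteq> {}" "\<And>i. i \<in> I \<Longrightarrow> (\<lambda>t. f t i) differentiable (at_right x)"
  shows "(\<lambda>t. Min (f t ` I)) differentiable (at_right x)"
  using assms
proof (induction I rule: finite_ne_induct)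
  case (insert i I)
  have "Min (f t ` insert i I) = min (f t i) (Min (f t ` I))" for t
    using insert.hyps by simp
  with differentiable_at_right_min[OF insert.prems[of i] insert.IH] insert.prems show ?case
    by simp
qed simp

lemma tendsto_Min_image:
  fixes f :: "'b \<Rightarrow> 'a \<Rightarrow> real"
  assumes "finite I" "I \<noteq> {}" "\<And>i. i \<in> I \<Longrightarrow> ((\<lambda>n. f n i) \<longlongrightarrow> l i) F"
  shows "((\<lambda>n. Min (f n ` I)) \<longlongrightarrow> Min (l ` I)) F"
  using assms
proof (induction I rule: finite_ne_induct)
  case (insert i I)
  have "Min (f n ` insert i I) = min (f n i) (Min (f n ` I))" for n
    using insert.hyps by simp
  moreover have "Min (l ` insert i I) = min (l i) (Min (l ` I))"
    using insert.hyps by simp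
  ultimately show ?case
    using tendsto_min[OF insert.prems[of i] insert.IH] insert.prems by simp
qed simp

lemma abs_Min_image_diff_le:
  fixes f g :: "'a \<Rightarrow> real"
  assumes "finite I" "I \<noteq> {}"
  shows "\<bar>Min (f ` I) - Min (g ` I)\<bar> \<le> (\<Sum>i\<in>I. \<bar>f i - g i\<bar>)"
proof -
  have one_side: "Min (f ` I) - Min (g ` I) \<le> (\<Sum>i\<in>I. \<bar>f i - g i\<bar>)" for f g :: "'a \<Rightarrow> real"
proof -
    have "Min (g ` I) \<in> g ` I" using assms by (intro Min_in) auto
    then obtain j where j: "j \<in> I" "Min (g ` I) = g j" by blast
    have "Min (f ` I) \<le> f j" using assms j by (intro Min_le) auto
    moreover have "\<bar>f j - g j\<bar> \<le> (\<Sum>i\<in>I. \<bar>f i - g i\<bar>)"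
      using assms j by (intro member_le_sum) auto
    ultimately show ?thesis using j by linarith
  qed
  show ?thesis
    using one_side[of f g] one_side[of g f] by (simp add: abs_le_iff abs_minus_commute)
qed

lemma eventually_at_right_unit_interval: "eventually (\<lambda>t::real. 0 < t \<and> t < 1) (at_right 0)"
  unfolding eventually_at_right_field by (intro exI[of _ 1]) auto

lemma subseq_limit_le_of_incseq:
  fixes d u v :: "nat \<Rightarrow> real"
  assumes "incseq d" and d_le_u: "\<And>n. d n \<le> u (Suc n)" and v_le_d: "\<And>n. v n \<le> d n"
    and "strict_mono \<sigma>" and u: "(\<lambda>n. u (\<sigma> n)) \<longlonglongrightarrow> U" and v: "(\<lambda>n. v (\<sigma> n)) \<longlonglongrightarrow> V"
  shows "V \<le> U"
proof -
  have large: "eventually (\<lambda>n. Suc m \<le> \<sigma> n) sequentially" for m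
    using filterlim_subseq[OF \<open>strict_mono \<sigma>\<close>] by (simp add: filterlim_at_top)
  have d_le_U: "d m \<le> U" for m
  proof (rule tendsto_lowerbound[OF u])
    show "eventually (\<lambda>n. d m \<le> u (\<sigma> n)) sequentially"
      using large[of m]
    proof eventually_elim
      case (elim n)
      then obtain k where k: "\<sigma> n = Suc k" "m \<le> k" by (cases "\<sigma> n") auto
      then show ?case using monoD[OF \<open>incseq d\<close> \<open>m \<le> k\<close>] d_le_u[of k] by simp
    qed
  qed simp
  show ?thesis
  proof (rule tendsto_upperbound[OF v])
    show "eventually (\<lambda>n. v (\<sigma> n) \<le> U) sequentially"
      by (intro always_eventually allI order_trans[OF v_le_d d_le_U])
  qed simp
qed

lemma eventually_subseq_Suc:
  assumes "strict_mono \<sigma>" "\<And>n. P (Suc n)"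
  shows "eventually (\<lambda>n. P (\<sigma> n)) sequentially"
proof -
  have "eventually (\<lambda>n. 1 \<le> \<sigma> n) sequentially"
    using filterlim_subseq[OF assms(1)] by (simp add: filterlim_at_top)
  then show ?thesis
  proof eventually_elim
    case (elim n)
    then obtain m where "\<sigma> n = Suc m" by (cases "\<sigma> n") auto
    then show ?case using assms(2) by simp
  qed
qed

lemma log_le_tangent:
  fixes x y :: real
  assumes "0 < x" "0 < y"
  shows "log 2 x \<le> log 2 y + (x - y) / (y * ln 2)"
proof -
  have "log 2 x - log 2 y = (ln x - ln y) / ln 2"
    by (simp add: log_def diff_divide_distrib)
  also have "\<dots> \<le> ((x - y) / y) / ln 2"
    using ln_diff_le[OF assms] by (intro divide_right_mono) auto
  finally show ?thesis by (simp add: divide_divide_eq_left)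
qed

lemma quadratic_form_nonneg_imp:
  fixes a b c :: real
  assumes q: "\<forall>u v. 0 \<le> u\<^sup>2 * a + 2 * u * v * b + v\<^sup>2 * c"
  shows "0 \<le> a \<and> 0 \<le> c \<and> b\<^sup>2 \<le> a * c"
proof -
  have a: "0 \<le> a" and c: "0 \<le> c" using q[rule_format, of 1 0] q[rule_format, of 0 1] by simp_all
  have "b\<^sup>2 \<le> a * c"
  proof (cases "a = 0")
    case True
    have "b = 0"
    proof (rule ccontr)
      assume "b \<noteq> 0"
      have "0 \<le> (- (c + 1) / (2 * b))\<^sup>2 * a + 2 * (- (c + 1) / (2 * b)) * 1 * b + 1\<^sup>2 * c"
        using q[rule_format, of "- (c + 1) / (2 * b)" 1] .
      also have "\<dots> = -1" using True \<open>b \<noteq> 0\<close> by (simp add: field_simps)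
      finally show False by simp
    qed
    then show ?thesis using True by simp
  next
    case False
    have "0 \<le> (- b)\<^sup>2 * a + 2 * (- b) * a * b + a\<^sup>2 * c"
      using q[rule_format, of "- b" a] .
    also have "\<dots> = a * (a * c - b\<^sup>2)" by (simp add: power2_eq_square algebra_simps)
    finally show ?thesis using False a by (simp add: zero_le_mult_iff)
  qed
  with a c show ?thesis by blast
qed

lemma quadratic_form_nonneg_iff:
  fixes a b c :: real
  shows "(\<forall>u v. 0 \<le> u\<^sup>2 * a + 2 * u * v * b + v\<^sup>2 * c) \<longleftrightarrow> 0 \<le> a \<and> 0 \<le> c \<and> b\<^sup>2 \<le> a * c"
proof (intro iffI allI)
  fix u v :: real
  assume abc: "0 \<le> a \<and> 0 \<le> c \<and> b\<^sup>2 \<le> a * c"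
  show "0 \<le> u\<^sup>2 * a + 2 * u * v * b + v\<^sup>2 * c"
  proof (cases "a = 0")
    case True
    then show ?thesis using abc by simp
  next
    case False
    have "a * (u\<^sup>2 * a + 2 * u * v * b + v\<^sup>2 * c) = (a * u + b * v)\<^sup>2 + (a * c - b\<^sup>2) * v\<^sup>2"
      by (simp add: power2_eq_square algebra_simps)
    also have "\<dots> \<ge> 0" using abc by simp
    finally show ?thesis using False abc by (simp add: zero_le_mult_iff)
  qed
qed (rule quadratic_form_nonneg_imp)

section \<open>Covariance matrices\<close>

definition seg :: "(nat \<Rightarrow> cmat) \<Rightarrow> (nat \<Rightarrow> cmat) \<Rightarrow> real \<Rightarrow> nat \<Rightarrow> cmat" where
  "seg Q Q' t = (\<lambda>g x y. Q g x y + complex_of_real t * (Q' g x y - Q g x y))"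

lemma Re_sum_sum_affine:
  "Re (\<Sum>x\<in>I. \<Sum>y\<in>J. (A x y + complex_of_real t * (A' x y - A x y)) * w x y)
   = Re (\<Sum>x\<in>I. \<Sum>y\<in>J. A x y * w x y)
     + t * (Re (\<Sum>x\<in>I. \<Sum>y\<in>J. A' x y * w x y) - Re (\<Sum>x\<in>I. \<Sum>y\<in>J. A x y * w x y))"
proof -
  have "(\<Sum>x\<in>I. \<Sum>y\<in>J. (A x y + complex_of_real t * (A' x y - A x y)) * w x y)
    = (\<Sum>x\<in>I. \<Sum>y\<in>J. A x y * w x y)
      + complex_of_real t * ((\<Sum>x\<in>I. \<Sum>y\<in>J. A' x y * w x y) - (\<Sum>x\<in>I. \<Sum>y\<in>J. A x y * w x y))"
    by (simp add: algebra_simps sum.distrib sum_subtractf sum_distrib_left)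
  then show ?thesis by simp
qed

lemma trhh_seg:
  "trhh B M (seg Q Q' t g) h = (1 - t) * trhh B M (Q g) h + t * trhh B M (Q' g) h"
  unfolding trhh_def seg_def by (simp only: Re_sum_sum_affine) (simp add: algebra_simps)

lemma blocktr_seg:
  "blocktr M (seg Q Q' t g) b = (1 - t) * blocktr M (Q g) b + t * blocktr M (Q' g) b"
  unfolding blocktr_def seg_def by (simp add: sum.distrib sum_subtractf sum_distrib_left algebra_simps)

lemma trhh_eq_quadratic_form:
  "trhh B M A v = Re (\<Sum>x\<in>idx B M. \<Sum>y\<in>idx B M. cnj (v x) * A x y * v y)"
  unfolding trhh_def by (intro arg_cong[where f = Re] sum.cong refl) (simp add: ac_simps)

lemma trhh_nonneg: "herm_psd B M A \<Longrightarrow> 0 \<le> trhh B M A h"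
  unfolding herm_psd_def trhh_eq_quadratic_form by blast

lemma feasQ_trhh_nonneg: "feasQ B M G P Bg Q \<Longrightarrow> g < G \<Longrightarrow> 0 \<le> trhh B M (Q g) h"
  unfolding feasQ_def by (blast intro: trhh_nonneg)

lemma herm_psd_seg:
  assumes "herm_psd B M (Q g)" "herm_psd B M (Q' g)" "0 \<le> t" "t \<le> 1"
  shows "herm_psd B M (seg Q Q' t g)"
  unfolding herm_psd_def
proof (intro conjI ballI allI)
  fix x y assume "x \<in> idx B M" "y \<in> idx B M"
  then have "Q g y x = cnj (Q g x y)" "Q' g y x = cnj (Q' g x y)"
    using assms(1,2) unfolding herm_psd_def by blast+
  then show "seg Q Q' t g y x = cnj (seg Q Q' t g x y)"
    unfolding seg_def by simp
next
  fix v :: cvec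
  have "0 \<le> trhh B M (Q g) v" "0 \<le> trhh B M (Q' g) v"
    using assms(1,2) by (blast intro: trhh_nonneg)+
  then have "0 \<le> trhh B M (seg Q Q' t g) v"
    unfolding trhh_seg using assms(3,4) by simp
  then show "0 \<le> Re (\<Sum>x\<in>idx B M. \<Sum>y\<in>idx B M. cnj (v x) * seg Q Q' t g x y * v y)"
    unfolding trhh_eq_quadratic_form .
qed

lemma feasQ_seg:
  assumes "feasQ B M G P Bg Q" "feasQ B M G P Bg Q'" "0 \<le> t" "t \<le> 1"
  shows "feasQ B M G P Bg (seg Q Q' t)"
  unfolding feasQ_def
proof (intro conjI allI impI)
  fix g assume "g < G"
  then show "herm_psd B M (seg Q Q' t g)"
    using assms by (intro herm_psd_seg) (auto simp: feasQ_def)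
next
  fix b assume b: "b < B"
  have "(\<Sum>g<G. blocktr M (seg Q Q' t g) b)
      = (1 - t) * (\<Sum>g<G. blocktr M (Q g) b) + t * (\<Sum>g<G. blocktr M (Q' g) b)"
    by (simp add: blocktr_seg sum.distrib sum_distrib_left)
  also have "\<dots> \<le> (1 - t) * P b + t * P b"
    using assms b unfolding feasQ_def by (intro add_mono mult_left_mono) auto
  finally show "(\<Sum>g<G. blocktr M (seg Q Q' t g) b) \<le> P b" by (simp add: algebra_simps)
next
  fix g b b' i j assume "g < G" "b < B" "b' < B" "b \<notin> Bg g \<or> b' \<notin> Bg g" "i < M" "j < M"
  then show "seg Q Q' t g (b, i) (b', j) = 0"
    using assms unfolding feasQ_def seg_def by simp
qed

lemma feasR_seg:
  assumes "feasR B M G P Bg K Q s" "feasR B M G P Bg K Q' s'" "0 \<le> t" "t \<le> 1"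
  shows "feasR B M G P Bg K (seg Q Q' t) (\<lambda>k. s k + t * (s' k - s k))"
  unfolding feasR_def
proof (intro conjI ballI)
  show "feasQ B M G P Bg (seg Q Q' t)"
    using assms by (intro feasQ_seg) (auto simp: feasR_def)
  fix k assume "k \<in> K"
  then have "0 \<le> s k" "s k \<le> 1" "0 \<le> s' k" "s' k \<le> 1"
    using assms(1,2) unfolding feasR_def by auto
  moreover have "s k + t * (s' k - s k) = (1 - t) * s k + t * s' k"
    by (simp add: algebra_simps)
  ultimately show "0 \<le> s k + t * (s' k - s k)" "s k + t * (s' k - s k) \<le> 1"
    using assms(3,4) by (auto intro: convex_bound_le)
qed

lemma trhh_tendsto:
  assumes "\<forall>x\<in>idx B M. \<forall>y\<in>idx B M. ((\<lambda>n. A n x y) \<longlongrightarrow> Al x y) F"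
  shows "((\<lambda>n. trhh B M (A n) h) \<longlongrightarrow> trhh B M Al h) F"
  unfolding trhh_def using assms by (intro tendsto_Re tendsto_sum tendsto_mult_right) auto

lemma herm_psd_limit:
  assumes psd: "\<And>n. herm_psd B M (A n)"
    and conv: "\<forall>x\<in>idx B M. \<forall>y\<in>idx B M. (\<lambda>n. A n x y) \<longlonglongrightarrow> Al x y"
  shows "herm_psd B M Al"
  unfolding herm_psd_def
proof (intro conjI ballI allI)
  fix x y assume xy: "x \<in> idx B M" "y \<in> idx B M"
  have "A n y x = cnj (A n x y)" for n
    using psd[of n] xy unfolding herm_psd_def by blast
  then have "(\<lambda>n. A n y x) \<longlonglongrightarrow> cnj (Al x y)"
    using conv xy by (simp add: tendsto_cnj)
  then show "Al y x = cnj (Al x y)"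
    using conv xy LIMSEQ_unique by blast
next
  fix v :: cvec
  have "(\<lambda>n. trhh B M (A n) v) \<longlonglongrightarrow> trhh B M Al v"
    using conv by (rule trhh_tendsto)
  moreover have "0 \<le> trhh B M (A n) v" for n
    using psd by (rule trhh_nonneg)
  ultimately have "0 \<le> trhh B M Al v"
    by (intro LIMSEQ_le_const) auto
  then show "0 \<le> Re (\<Sum>x\<in>idx B M. \<Sum>y\<in>idx B M. cnj (v x) * Al x y * v y)"
    unfolding trhh_eq_quadratic_form .
qed

lemma feasQ_limit:
  assumes feas: "\<And>n. feasQ B M G P Bg (A n)"
    and conv: "\<forall>g<G. \<forall>x\<in>idx B M. \<forall>y\<in>idx B M. (\<lambda>n. A n g x y) \<longlonglongrightarrow> Al g x y"
  shows "feasQ B M G P Bg Al"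
  unfolding feasQ_def
proof (intro conjI allI impI)
  fix g assume "g < G"
  have "herm_psd B M (A n g)" for n
    using feas[of n] \<open>g < G\<close> unfolding feasQ_def by blast
  moreover have "\<forall>x\<in>idx B M. \<forall>y\<in>idx B M. (\<lambda>n. A n g x y) \<longlonglongrightarrow> Al g x y"
    using conv \<open>g < G\<close> by blast
  ultimately show "herm_psd B M (Al g)"
    by (rule herm_psd_limit)
next
  fix b assume b: "b < B"
  have "(\<lambda>n. \<Sum>g<G. blocktr M (A n g) b) \<longlonglongrightarrow> (\<Sum>g<G. blocktr M (Al g) b)"
    unfolding blocktr_def using conv b by (intro tendsto_sum tendsto_Re) (auto simp: idx_def)
  moreover have "(\<Sum>g<G. blocktr M (A n g) b) \<le> P b" for n
    using feas[of n] b unfolding feasQ_def by blast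
  ultimately show "(\<Sum>g<G. blocktr M (Al g) b) \<le> P b" by (intro LIMSEQ_le_const2) auto
next
  fix g b b' i j assume ij: "g < G" "b < B" "b' < B" "b \<notin> Bg g \<or> b' \<notin> Bg g" "i < M" "j < M"
  have "(\<lambda>n. A n g (b, i) (b', j)) \<longlonglongrightarrow> Al g (b, i) (b', j)"
    using conv ij by (auto simp: idx_def)
  moreover have "A n g (b, i) (b', j) = 0" for n
    using feas[of n] ij unfolding feasQ_def by blast
  ultimately show "Al g (b, i) (b', j) = 0"
    by (simp add: LIMSEQ_const_iff)
qed

lemma feasR_limit:
  assumes "\<And>n. feasQ B M G P Bg (A n)"
    and "eventually (\<lambda>n. \<forall>k\<in>K. 0 \<le> s n k \<and> s n k \<le> 1) sequentially"
    and "\<forall>g<G. \<forall>x\<in>idx B M. \<forall>y\<in>idx B M. (\<lambda>n. A n g x y) \<longlonglongrightarrow> Al g x y"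
    and s_conv: "\<forall>k\<in>K. (\<lambda>n. s n k) \<longlonglongrightarrow> sl k"
  shows "feasR B M G P Bg K Al sl"
  unfolding feasR_def
proof (intro conjI ballI)
  show "feasQ B M G P Bg Al" using assms(1,3) by (rule feasQ_limit)
  fix k assume k: "k \<in> K"
  then have bounds: "eventually (\<lambda>n. 0 \<le> s n k \<and> s n k \<le> 1) sequentially"
    using assms(2) by (auto elim: eventually_mono)
  have lim: "(\<lambda>n. s n k) \<longlonglongrightarrow> sl k" using s_conv k by blast
  show "0 \<le> sl k" by (rule tendsto_lowerbound[OF lim]) (use bounds in \<open>auto elim: eventually_mono\<close>)
  show "sl k \<le> 1" by (rule tendsto_upperbound[OF lim]) (use bounds in \<open>auto elim: eventually_mono\<close>)
qed

section \<open>Rates and their tangent minorants\<close>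

lemma rate_eq_log_diff:
  assumes "g < G" and nonneg: "\<forall>l<G. 0 \<le> trhh B M (Q l) hk"
  shows "rate B M G hk Q g
    = log 2 (1 + (\<Sum>l<G. trhh B M (Q l) hk)) - log 2 (1 + (\<Sum>l\<in>{0..<G} - {g}. trhh B M (Q l) hk))"
proof -
  define I where "I = (\<Sum>l\<in>{0..<G} - {g}. trhh B M (Q l) hk)"
  define S where "S = trhh B M (Q g) hk"
  have "0 \<le> I" "0 \<le> S" unfolding I_def S_def using nonneg \<open>g < G\<close> by (auto intro: sum_nonneg)
  have total: "(\<Sum>l<G. trhh B M (Q l) hk) = S + I"
    unfolding S_def I_def using sum.remove[of "{..<G}" g] \<open>g < G\<close> by (simp add: atLeast0LessThan)
  have "1 + S / (I + 1) = (1 + (S + I)) / (1 + I)"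
    using \<open>0 \<le> I\<close> by (simp add: field_simps)
  then have "rate B M G hk Q g = log 2 ((1 + (S + I)) / (1 + I))"
    unfolding rate_def S_def I_def by simp
  also have "\<dots> = log 2 (1 + (S + I)) - log 2 (1 + I)"
    using \<open>0 \<le> I\<close> \<open>0 \<le> S\<close> by (simp add: log_divide)
  finally show ?thesis unfolding total I_def .
qed

lemma rate_bar_le_rate:
  assumes "g < G" and nonneg: "\<forall>l<G. 0 \<le> trhh B M (Q l) hk"
    and nonneg_t: "\<forall>l<G. 0 \<le> trhh B M (Qt l) hk"
  shows "rate_bar B M G hk Q Qt g \<le> rate B M G hk Q g"
proof -
  let ?I = "\<lambda>A. \<Sum>l\<in>{0..<G} - {g}. trhh B M (A l) hk"
  have "0 \<le> ?I Q" "0 \<le> ?I Qt" using nonneg nonneg_t by (auto intro: sum_nonneg)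
  then have "log 2 (1 + ?I Q) \<le> log 2 (1 + ?I Qt) + (?I Q - ?I Qt) / ((1 + ?I Qt) * ln 2)"
    using log_le_tangent[of "1 + ?I Q" "1 + ?I Qt"] by simp
  then show ?thesis
    unfolding rate_eq_log_diff[OF assms(1,2)] rate_bar_def by (simp add: sum_subtractf)
qed

lemma rate_bar_self:
  assumes "g < G" "\<forall>l<G. 0 \<le> trhh B M (Q l) hk"
  shows "rate_bar B M G hk Q Q g = rate B M G hk Q g"
  unfolding rate_eq_log_diff[OF assms] rate_bar_def by simp

lemma rate_tendsto:
  assumes "g < G"
    and conv: "\<forall>l<G. ((\<lambda>n. trhh B M (A n l) hk) \<longlongrightarrow> trhh B M (Al l) hk) F"
    and nonneg: "\<forall>l<G. 0 \<le> trhh B M (Al l) hk"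
  shows "((\<lambda>n. rate B M G hk (A n) g) \<longlongrightarrow> rate B M G hk Al g) F"
proof -
  have "0 \<le> (\<Sum>l\<in>{0..<G} - {g}. trhh B M (Al l) hk)" "0 \<le> trhh B M (Al g) hk"
    using nonneg \<open>g < G\<close> by (auto intro: sum_nonneg)
  then show ?thesis
    unfolding rate_def using conv \<open>g < G\<close>
    by (intro tendsto_intros) (auto simp: add_nonneg_eq_0_iff add_pos_nonneg)
qed

lemma rate_bar_tendsto:
  assumes conv: "\<forall>l<G. ((\<lambda>n. trhh B M (A n l) hk) \<longlongrightarrow> trhh B M (Al l) hk) F"
    and nonneg: "\<forall>l<G. 0 \<le> trhh B M (Al l) hk"
  shows "((\<lambda>n. rate_bar B M G hk Q (A n) g) \<longlongrightarrow> rate_bar B M G hk Q Al g) F"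
proof -
  have "0 \<le> (\<Sum>l\<in>{0..<G} - {g}. trhh B M (Al l) hk)"
    using nonneg by (auto intro: sum_nonneg)
  then show ?thesis
    unfolding rate_bar_def using conv by (intro tendsto_intros) auto
qed

lemma rate_seg_differentiable:
  assumes "g < G" and nonneg: "\<forall>l<G. 0 \<le> trhh B M (Q l) hk"
  shows "(\<lambda>t. rate B M G hk (seg Q Q' t) g) differentiable (at 0 within S)"
proof -
  let ?I = "\<lambda>A. \<Sum>l\<in>{0..<G} - {g}. trhh B M (A l) hk"
  define a b c d where "a = ?I Q" and "b = ?I Q'" and "c = trhh B M (Q g) hk" and "d = trhh B M (Q' g) hk"
  have "0 \<le> a" "0 \<le> c" unfolding a_def c_def using nonneg \<open>g < G\<close> by (auto intro: sum_nonneg)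
  have "rate B M G hk (seg Q Q' t) g = log 2 (1 + ((1 - t) * c + t * d) / (((1 - t) * a + t * b) + 1))" for t
    unfolding rate_def trhh_seg a_def b_def c_def d_def by (simp add: sum.distrib sum_distrib_left)
  moreover have "(\<lambda>t. log 2 (1 + ((1 - t) * c + t * d) / (((1 - t) * a + t * b) + 1))) differentiable (at 0 within S)"
    unfolding real_differentiable_def using \<open>0 \<le> a\<close> \<open>0 \<le> c\<close>
    by (auto intro!: exI derivative_eq_intros simp: add_pos_nonneg)
  ultimately show ?thesis by simp
qed

text \<open>The minorant built at \<open>Q\<close> is tangent to the rate at \<open>Q\<close>: along a segment leaving \<open>Q\<close>
  their difference is \<open>\<psi>\<close> below, with \<open>\<psi> 0 = 0\<close> and \<open>\<psi>' 0 = 0\<close>.\<close>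

lemma rate_sub_rate_bar_seg:
  assumes "g < G" and nonneg: "\<forall>l<G. 0 \<le> trhh B M (Q l) hk"
    and nonneg': "\<forall>l<G. 0 \<le> trhh B M (Q' l) hk"
  shows "((\<lambda>t. (rate B M G hk (seg Q Q' t) g - rate_bar B M G hk (seg Q Q' t) Q g) / t) \<longlongrightarrow> 0) (at_right 0)"
proof -
  let ?I = "\<lambda>A. \<Sum>l\<in>{0..<G} - {g}. trhh B M (A l) hk"
  define a b where "a = ?I Q" and "b = ?I Q'"
  have "0 \<le> a" unfolding a_def using nonneg by (auto intro: sum_nonneg)
  have I_seg: "?I (seg Q Q' t) = (1 - t) * a + t * b" for t
    unfolding a_def b_def by (simp add: trhh_seg sum.distrib sum_distrib_left)
  define \<psi> where "\<psi> t = log 2 (1 + a) + ((1 - t) * a + t * b - a) / ((1 + a) * ln 2)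
      - log 2 (1 + ((1 - t) * a + t * b))" for t
  have "(\<psi> has_real_derivative 0) (at_right 0)"
    unfolding \<psi>_def using \<open>0 \<le> a\<close> by (auto intro!: derivative_eq_intros simp: divide_simps)
  then have "((\<lambda>t. \<psi> t / t) \<longlongrightarrow> 0) (at_right 0)"
    by (simp add: has_field_derivative_iff \<psi>_def)
  moreover have "eventually (\<lambda>t. \<psi> t / t
      = (rate B M G hk (seg Q Q' t) g - rate_bar B M G hk (seg Q Q' t) Q g) / t) (at_right 0)"
    using eventually_at_right_unit_interval
  proof eventually_elim
    case (elim t)
    then have nonneg_t: "\<forall>l<G. 0 \<le> trhh B M (seg Q Q' t l) hk"
      using nonneg nonneg' by (simp add: trhh_seg)
    have "rate B M G hk (seg Q Q' t) g - rate_bar B M G hk (seg Q Q' t) Q g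
        = log 2 (1 + a) + (?I (seg Q Q' t) - a) / ((1 + a) * ln 2) - log 2 (1 + ?I (seg Q Q' t))"
      unfolding rate_eq_log_diff[OF \<open>g < G\<close> nonneg_t] rate_bar_def a_def by (simp add: sum_subtractf)
    then show ?case unfolding \<psi>_def I_seg by simp
  qed
  ultimately show ?thesis
    by (rule tendsto_cong[THEN iffD1, rotated])
qed

section \<open>The max-min objective and the algorithm\<close>

locale multicast_network =
  fixes B M G :: nat and P :: "nat \<Rightarrow> real" and Bg :: "nat \<Rightarrow> nat set"
    and Kg :: "nat \<Rightarrow> 'u set" and \<tau> :: "nat \<Rightarrow> real" and \<delta> :: real and h :: "'u \<Rightarrow> cvec"
  assumes delta_pos: "0 < \<delta>" and G_pos: "1 \<le> G"
    and tau_pos: "\<And>g. g < G \<Longrightarrow> 0 < \<tau> g"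
    and Kg_finite: "\<And>g. g < G \<Longrightarrow> finite (Kg g)"
    and Kg_nonempty: "\<And>g. g < G \<Longrightarrow> Kg g \<noteq> {}"
begin

definition share :: "('u \<Rightarrow> real) \<Rightarrow> nat \<Rightarrow> real" where
  "share s g = (\<Sum>k\<in>Kg g. s k) / (\<tau> g * real (card (Kg g)))"

definition fair_obj :: "(nat \<Rightarrow> 'u \<Rightarrow> real) \<Rightarrow> ('u \<Rightarrow> real) \<Rightarrow> real" where
  "fair_obj r s = Min ((\<lambda>g. share s g * Min ((\<lambda>k. r g k + (1 - s k) / \<delta>) ` Kg g)) ` {..<G})"

lemma objF_eq_fair_obj: "objF B M G Kg \<tau> \<delta> h Q s = fair_obj (\<lambda>g k. rate B M G (h k) Q g) s"
  by (simp add: objF_def fair_obj_def share_def)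

lemma groups_nonempty: "{..<G} \<noteq> {}"
  using G_pos by (auto simp: lessThan_empty_iff)

lemma share_denominator_pos: "g < G \<Longrightarrow> 0 < \<tau> g * real (card (Kg g))"
  using tau_pos Kg_finite Kg_nonempty by (simp add: card_gt_0_iff)

lemma share_denominator_nonzero: "g < G \<Longrightarrow> \<tau> g * real (card (Kg g)) \<noteq> 0"
  using share_denominator_pos by (metis less_irrefl)

lemma share_tendsto:
  assumes "g < G" "\<And>k. k \<in> Kg g \<Longrightarrow> ((\<lambda>n. s n k) \<longlongrightarrow> sl k) F"
  shows "((\<lambda>n. share (s n) g) \<longlongrightarrow> share sl g) F"
  unfolding share_def
  by (intro tendsto_divide tendsto_sum tendsto_const assms share_denominator_nonzero)

lemma share_differentiable:
  fixes s :: "real \<Rightarrow> 'u \<Rightarrow> real"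
  assumes "g < G" "\<And>k. k \<in> Kg g \<Longrightarrow> (\<lambda>t. s t k) differentiable (at_right x)"
  shows "(\<lambda>t. share (s t) g) differentiable (at_right x)"
  unfolding share_def using assms Kg_finite share_denominator_nonzero
  by (intro differentiable_divide differentiable_sum differentiable_const) auto

lemma fair_obj_tendsto:
  assumes r: "\<And>g k. g < G \<Longrightarrow> k \<in> Kg g \<Longrightarrow> ((\<lambda>n. r n g k) \<longlongrightarrow> rl g k) F"
    and s: "\<And>g k. g < G \<Longrightarrow> k \<in> Kg g \<Longrightarrow> ((\<lambda>n. s n k) \<longlongrightarrow> sl k) F"
  shows "((\<lambda>n. fair_obj (r n) (s n)) \<longlongrightarrow> fair_obj rl sl) F"
  unfolding fair_obj_def
proof (rule tendsto_Min_image[OF _ groups_nonempty])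
  fix g assume "g \<in> {..<G}"
  then have "g < G" by simp
  have "((\<lambda>n. Min ((\<lambda>k. r n g k + (1 - s n k) / \<delta>) ` Kg g))
      \<longlongrightarrow> Min ((\<lambda>k. rl g k + (1 - sl k) / \<delta>) ` Kg g)) F"
    using r s \<open>g < G\<close> delta_pos
    by (intro tendsto_Min_image[OF Kg_finite Kg_nonempty] tendsto_intros) auto
  moreover have "((\<lambda>n. share (s n) g) \<longlongrightarrow> share sl g) F"
    using s \<open>g < G\<close> by (intro share_tendsto) auto
  ultimately show "((\<lambda>n. share (s n) g * Min ((\<lambda>k. r n g k + (1 - s n k) / \<delta>) ` Kg g))
      \<longlongrightarrow> share sl g * Min ((\<lambda>k. rl g k + (1 - sl k) / \<delta>) ` Kg g)) F"
    by (intro tendsto_mult)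
qed simp

lemma fair_obj_differentiable:
  fixes r :: "real \<Rightarrow> nat \<Rightarrow> 'u \<Rightarrow> real" and s :: "real \<Rightarrow> 'u \<Rightarrow> real"
  assumes r: "\<And>g k. g < G \<Longrightarrow> k \<in> Kg g \<Longrightarrow> (\<lambda>t. r t g k) differentiable (at_right x)"
    and s: "\<And>g k. g < G \<Longrightarrow> k \<in> Kg g \<Longrightarrow> (\<lambda>t. s t k) differentiable (at_right x)"
  shows "(\<lambda>t. fair_obj (r t) (s t)) differentiable (at_right x)"
  unfolding fair_obj_def
proof (rule differentiable_at_right_Min[where f = "\<lambda>t g. share (s t) g * Min ((\<lambda>k. r t g k + (1 - s t k) / \<delta>) ` Kg g)"])
  fix g assume "g \<in> {..<G}"
  then have "g < G" by simp
  have "(\<lambda>t. Min ((\<lambda>k. r t g k + (1 - s t k) / \<delta>) ` Kg g)) differentiable (at_right x)"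
    using r s \<open>g < G\<close> delta_pos
    by (intro differentiable_at_right_Min[OF Kg_finite Kg_nonempty] derivative_intros) auto
  moreover have "(\<lambda>t. share (s t) g) differentiable (at_right x)"
    using s \<open>g < G\<close> by (intro share_differentiable) auto
  ultimately show "(\<lambda>t. share (s t) g * Min ((\<lambda>k. r t g k + (1 - s t k) / \<delta>) ` Kg g)) differentiable (at_right x)"
    by (intro differentiable_mult)
qed (use groups_nonempty in simp_all)

lemma abs_fair_obj_diff_le:
  "\<bar>fair_obj r s - fair_obj r' s\<bar> \<le> (\<Sum>g<G. \<bar>share s g\<bar> * (\<Sum>k\<in>Kg g. \<bar>r g k - r' g k\<bar>))"
proof -
  let ?m = "\<lambda>r g. Min ((\<lambda>k. r g k + (1 - s k) / \<delta>) ` Kg g)"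
  have "\<bar>fair_obj r s - fair_obj r' s\<bar> \<le> (\<Sum>g<G. \<bar>share s g * ?m r g - share s g * ?m r' g\<bar>)"
    unfolding fair_obj_def using groups_nonempty by (intro abs_Min_image_diff_le) auto
  also have "\<dots> \<le> (\<Sum>g<G. \<bar>share s g\<bar> * (\<Sum>k\<in>Kg g. \<bar>r g k - r' g k\<bar>))"
  proof (rule sum_mono)
    fix g assume "g \<in> {..<G}"
    then have "\<bar>?m r g - ?m r' g\<bar> \<le> (\<Sum>k\<in>Kg g. \<bar>r g k - r' g k\<bar>)"
      using abs_Min_image_diff_le[OF Kg_finite Kg_nonempty, of g "\<lambda>k. r g k + (1 - s k) / \<delta>"
          "\<lambda>k. r' g k + (1 - s k) / \<delta>"] by simp
    then show "\<bar>share s g * ?m r g - share s g * ?m r' g\<bar> \<le> \<bar>share s g\<bar> * (\<Sum>k\<in>Kg g. \<bar>r g k - r' g k\<bar>)"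
      by (simp add: abs_mult mult_left_mono flip: right_diff_distrib)
  qed
  finally show ?thesis .
qed

lemma sq_le_fair_obj:
  assumes lmi: "\<And>g. g < G \<Longrightarrow> \<forall>u v. 0 \<le> u\<^sup>2 * R g + 2 * u * v * (\<alpha> * sqrt (\<tau> g * real (card (Kg g))))
                                      + v\<^sup>2 * (\<Sum>k\<in>Kg g. s k)"
    and R_le: "\<And>g k. g < G \<Longrightarrow> k \<in> Kg g \<Longrightarrow> R g \<le> r g k + (1 - s k) / \<delta>"
  shows "\<alpha>\<^sup>2 \<le> fair_obj r s"
  unfolding fair_obj_def
proof (rule Min.boundedI)
  fix a assume "a \<in> (\<lambda>g. share s g * Min ((\<lambda>k. r g k + (1 - s k) / \<delta>) ` Kg g)) ` {..<G}"
  then obtain g where "g < G" and a: "a = share s g * Min ((\<lambda>k. r g k + (1 - s k) / \<delta>) ` Kg g)"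
    by auto
  define c S where "c = \<tau> g * real (card (Kg g))" and "S = (\<Sum>k\<in>Kg g. s k)"
  have "0 < c" unfolding c_def using share_denominator_pos[OF \<open>g < G\<close>] .
  have "0 \<le> R g" "0 \<le> S" "(\<alpha> * sqrt c)\<^sup>2 \<le> R g * S"
    using lmi[OF \<open>g < G\<close>] unfolding quadratic_form_nonneg_iff c_def S_def by auto
  then have "\<alpha>\<^sup>2 \<le> S / c * R g"
    using \<open>0 < c\<close> by (simp add: power_mult_distrib field_simps)
  also have "\<dots> \<le> S / c * Min ((\<lambda>k. r g k + (1 - s k) / \<delta>) ` Kg g)"
    using R_le \<open>g < G\<close> \<open>0 \<le> S\<close> \<open>0 < c\<close> Kg_finite Kg_nonempty
    by (intro mult_left_mono) (auto simp: Min_ge_iff)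
  finally show "\<alpha>\<^sup>2 \<le> a"
    unfolding a share_def c_def S_def .
qed (use groups_nonempty in simp_all)

lemma fair_obj_lmi:
  assumes pos: "0 < fair_obj r s" and s_nonneg: "\<And>k. k \<in> Kg g \<Longrightarrow> 0 \<le> s k" and "g < G"
  shows "\<forall>u v. 0 \<le> u\<^sup>2 * Min ((\<lambda>k. r g k + (1 - s k) / \<delta>) ` Kg g)
      + 2 * u * v * (sqrt (fair_obj r s) * sqrt (\<tau> g * real (card (Kg g)))) + v\<^sup>2 * (\<Sum>k\<in>Kg g. s k)"
proof -
  define c S R where "c = \<tau> g * real (card (Kg g))" and "S = (\<Sum>k\<in>Kg g. s k)"
    and "R = Min ((\<lambda>k. r g k + (1 - s k) / \<delta>) ` Kg g)"
  have "0 < c" unfolding c_def using share_denominator_pos[OF \<open>g < G\<close>] .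
  have "0 \<le> S" unfolding S_def using s_nonneg by (intro sum_nonneg) auto
  have "fair_obj r s \<le> S / c * R"
    unfolding fair_obj_def share_def S_def c_def R_def using \<open>g < G\<close> by (intro Min_le) auto
  then have "0 < S / c * R" using pos by linarith
  then have "0 \<le> R" using \<open>0 \<le> S\<close> \<open>0 < c\<close> by (simp add: zero_less_mult_iff zero_less_divide_iff)
  have "(sqrt (fair_obj r s) * sqrt c)\<^sup>2 = fair_obj r s * c"
    using pos \<open>0 < c\<close> by (simp add: power_mult_distrib)
  also have "\<dots> \<le> R * S"
    using \<open>fair_obj r s \<le> S / c * R\<close> \<open>0 < c\<close> by (simp add: field_simps)
  finally show ?thesis
    unfolding quadratic_form_nonneg_iff c_def[symmetric] S_def[symmetric] R_def[symmetric]
    using \<open>0 \<le> R\<close> \<open>0 \<le> S\<close> by simp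
qed

text \<open>The objective of (R) with every rate replaced by its minorant at \<open>Qt\<close>; the subproblem at
  \<open>Qt\<close> maximises its square root.\<close>

definition surrogate :: "(nat \<Rightarrow> cmat) \<Rightarrow> (nat \<Rightarrow> cmat) \<Rightarrow> ('u \<Rightarrow> real) \<Rightarrow> real" where
  "surrogate Qt Q s = fair_obj (\<lambda>g k. rate_bar B M G (h k) Q Qt g) s"

lemma feasSub_feasQ: "feasSub B M G P Bg Kg \<tau> \<delta> h Qt Q R s \<alpha> \<Longrightarrow> feasQ B M G P Bg Q"
  unfolding feasSub_def by blast

lemma feasSub_rate_bound:
  assumes "feasQ B M G P Bg Qt" and sub: "feasSub B M G P Bg Kg \<tau> \<delta> h Qt Q R s \<alpha>"
    and "g < G" "k \<in> Kg g"
  shows "R g \<le> rate B M G (h k) Q g + (1 - s k) / \<delta>"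
proof -
  have "R g \<le> rate_bar B M G (h k) Q Qt g + (1 - s k) / \<delta>"
    using sub \<open>g < G\<close> \<open>k \<in> Kg g\<close> unfolding feasSub_def by blast
  also have "rate_bar B M G (h k) Q Qt g \<le> rate B M G (h k) Q g"
    using feasSub_feasQ[OF sub] assms(1) \<open>g < G\<close> by (intro rate_bar_le_rate) (auto intro: feasQ_trhh_nonneg)
  finally show ?thesis by simp
qed

lemma sq_le_objF_of_feasSub:
  assumes "feasQ B M G P Bg Qt" and sub: "feasSub B M G P Bg Kg \<tau> \<delta> h Qt Q R s \<alpha>"
  shows "\<alpha>\<^sup>2 \<le> objF B M G Kg \<tau> \<delta> h Q s"
  unfolding objF_eq_fair_obj
proof (rule sq_le_fair_obj)
  show "\<forall>u v. 0 \<le> u\<^sup>2 * R g + 2 * u * v * (\<alpha> * sqrt (\<tau> g * real (card (Kg g)))) + v\<^sup>2 * (\<Sum>k\<in>Kg g. s k)"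
    if "g < G" for g
    using sub that unfolding feasSub_def by blast
qed (rule feasSub_rate_bound[OF assms])

lemma feasSub_recentre:
  assumes "feasQ B M G P Bg Qt" and sub: "feasSub B M G P Bg Kg \<tau> \<delta> h Qt Q R s \<alpha>"
  shows "feasSub B M G P Bg Kg \<tau> \<delta> h Q Q R s \<alpha>"
proof -
  have "R g \<le> rate_bar B M G (h k) Q Q g + (1 - s k) / \<delta>" if "g < G" "k \<in> Kg g" for g k
    using feasSub_rate_bound[OF assms that] rate_bar_self[OF \<open>g < G\<close>]
      feasQ_trhh_nonneg[OF feasSub_feasQ[OF sub]] by simp
  with sub show ?thesis unfolding feasSub_def by blast
qed

lemma feasSub_uminus:
  assumes "feasSub B M G P Bg Kg \<tau> \<delta> h Qt Q R s \<alpha>"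
  shows "feasSub B M G P Bg Kg \<tau> \<delta> h Qt Q R s (- \<alpha>)"
proof -
  have "0 \<le> u\<^sup>2 * R g + 2 * u * v * (- \<alpha> * sqrt (\<tau> g * real (card (Kg g)))) + v\<^sup>2 * (\<Sum>k\<in>Kg g. s k)"
    if "g < G" for g u v
proof -
    have "0 \<le> (- u)\<^sup>2 * R g + 2 * (- u) * v * (\<alpha> * sqrt (\<tau> g * real (card (Kg g))))
        + v\<^sup>2 * (\<Sum>k\<in>Kg g. s k)"
      using assms that unfolding feasSub_def by blast
    then show ?thesis by simp
  qed
  then have "\<forall>g<G. \<forall>u v. 0 \<le> u\<^sup>2 * R g + 2 * u * v * (- \<alpha> * sqrt (\<tau> g * real (card (Kg g))))
      + v\<^sup>2 * (\<Sum>k\<in>Kg g. s k)"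
    by blast
  with assms show ?thesis unfolding feasSub_def by (elim conjE) (intro conjI)
qed

text \<open>The LMI is invariant under \<open>\<alpha> \<mapsto> -\<alpha>\<close>, so optimal values are nonnegative.\<close>

lemma optSub_nonneg: "optSub B M G P Bg Kg \<tau> \<delta> h Qt Q R s \<alpha> \<Longrightarrow> 0 \<le> \<alpha>"
  unfolding optSub_def using feasSub_uminus by force

lemma surrogate_le_optSub:
  assumes opt: "optSub B M G P Bg Kg \<tau> \<delta> h Qt Q R s \<alpha>" and feas: "feasR B M G P Bg (\<Union>g<G. Kg g) Q' s'"
  shows "surrogate Qt Q' s' \<le> \<alpha>\<^sup>2"
proof (cases "0 < surrogate Qt Q' s'")
  case True
  define R' where "R' g = Min ((\<lambda>k. rate_bar B M G (h k) Q' Qt g + (1 - s' k) / \<delta>) ` Kg g)" for g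
  have "feasSub B M G P Bg Kg \<tau> \<delta> h Qt Q' R' s' (sqrt (surrogate Qt Q' s'))"
    unfolding feasSub_def
  proof (intro conjI)
    show "\<forall>g<G. \<forall>u v. 0 \<le> u\<^sup>2 * R' g
        + 2 * u * v * (sqrt (surrogate Qt Q' s') * sqrt (\<tau> g * real (card (Kg g)))) + v\<^sup>2 * (\<Sum>k\<in>Kg g. s' k)"
      using True feas unfolding R'_def surrogate_def feasR_def by (intro allI impI fair_obj_lmi) auto
    show "\<forall>g<G. \<forall>k\<in>Kg g. R' g \<le> rate_bar B M G (h k) Q' Qt g + (1 - s' k) / \<delta>"
      unfolding R'_def using Kg_finite by (auto intro: Min_le)
  qed (use feas in \<open>auto simp: feasR_def\<close>)
  then have "sqrt (surrogate Qt Q' s') \<le> \<alpha>"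
    using opt unfolding optSub_def by blast
  from power_mono[OF this real_sqrt_ge_zero, of 2] True show ?thesis
    by simp
next
  case False
  then show ?thesis using zero_le_power2[of \<alpha>] by linarith
qed

lemma objF_tendsto:
  assumes "feasQ B M G P Bg Al"
    and conv: "\<forall>g<G. \<forall>x\<in>idx B M. \<forall>y\<in>idx B M. ((\<lambda>n. A n g x y) \<longlongrightarrow> Al g x y) F"
    and s_conv: "\<forall>k\<in>(\<Union>g<G. Kg g). ((\<lambda>n. s n k) \<longlongrightarrow> sl k) F"
  shows "((\<lambda>n. objF B M G Kg \<tau> \<delta> h (A n) (s n)) \<longlongrightarrow> objF B M G Kg \<tau> \<delta> h Al sl) F"
  unfolding objF_eq_fair_obj
  using assms conv s_conv
  by (intro fair_obj_tendsto rate_tendsto) (auto intro: trhh_tendsto feasQ_trhh_nonneg)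

lemma surrogate_tendsto:
  assumes "feasQ B M G P Bg Al"
    and conv: "\<forall>g<G. \<forall>x\<in>idx B M. \<forall>y\<in>idx B M. ((\<lambda>n. A n g x y) \<longlongrightarrow> Al g x y) F"
  shows "((\<lambda>n. surrogate (A n) Q s) \<longlongrightarrow> surrogate Al Q s) F"
  unfolding surrogate_def
  using assms by (intro fair_obj_tendsto rate_bar_tendsto) (auto intro: trhh_tendsto feasQ_trhh_nonneg)

lemma objF_seg_differentiable:
  assumes "feasQ B M G P Bg Q"
  shows "(\<lambda>t. objF B M G Kg \<tau> \<delta> h (seg Q Q' t) (\<lambda>k. s k + t * (s' k - s k))) differentiable (at_right 0)"
  unfolding objF_eq_fair_obj using assms
  by (intro fair_obj_differentiable rate_seg_differentiable derivative_intros) (auto intro: feasQ_trhh_nonneg)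

lemma objF_sub_surrogate_seg:
  fixes s s' :: "'u \<Rightarrow> real"
  assumes "feasQ B M G P Bg Q" "feasQ B M G P Bg Q'"
  defines "st \<equiv> \<lambda>t k. s k + t * (s' k - s k)"
  shows "((\<lambda>t. (objF B M G Kg \<tau> \<delta> h (seg Q Q' t) (st t) - surrogate Q (seg Q Q' t) (st t)) / t)
      \<longlongrightarrow> 0) (at_right 0)"
proof (rule Lim_null_comparison)
  let ?d = "\<lambda>t g k. rate B M G (h k) (seg Q Q' t) g - rate_bar B M G (h k) (seg Q Q' t) Q g"
  define E where "E t = (\<Sum>g<G. \<bar>share (st t) g\<bar> * (\<Sum>k\<in>Kg g. \<bar>?d t g k / t\<bar>))" for t
  have "(E \<longlongrightarrow> (\<Sum>g<G. \<bar>share s g\<bar> * (\<Sum>k\<in>Kg g. \<bar>0\<bar>))) (at_right 0)"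
    unfolding E_def st_def using assms(1,2)
    by (intro tendsto_intros share_tendsto rate_sub_rate_bar_seg tendsto_eq_intros)
      (auto intro: feasQ_trhh_nonneg)
  then show "(E \<longlongrightarrow> 0) (at_right 0)" by simp
  show "eventually (\<lambda>t. norm ((objF B M G Kg \<tau> \<delta> h (seg Q Q' t) (st t)
      - surrogate Q (seg Q Q' t) (st t)) / t) \<le> E t) (at_right 0)"
    using eventually_at_right_less[of 0]
  proof eventually_elim
    case (elim t)
    let ?X = "\<Sum>g<G. \<bar>share (st t) g\<bar> * (\<Sum>k\<in>Kg g. \<bar>?d t g k\<bar>)"
    have "\<bar>objF B M G Kg \<tau> \<delta> h (seg Q Q' t) (st t) - surrogate Q (seg Q Q' t) (st t)\<bar> \<le> ?X"
      unfolding objF_eq_fair_obj surrogate_def by (rule abs_fair_obj_diff_le)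
    then have "\<bar>objF B M G Kg \<tau> \<delta> h (seg Q Q' t) (st t) - surrogate Q (seg Q Q' t) (st t)\<bar> / t \<le> ?X / t"
      using elim by (intro divide_right_mono) auto
    moreover have "E t = ?X / t"
      unfolding E_def using elim by (simp add: abs_divide sum_divide_distrib[symmetric] times_divide_eq_right)
    ultimately show ?case
      using elim by (simp add: abs_divide)
  qed
qed

lemma stationaryR_of_surrogate_le:
  assumes feas: "feasR B M G P Bg (\<Union>g<G. Kg g) Q s"
    and surrogate_le: "\<And>Q' s'. feasR B M G P Bg (\<Union>g<G. Kg g) Q' s' \<Longrightarrow> surrogate Q Q' s' \<le> objF B M G Kg \<tau> \<delta> h Q s"
  shows "stationaryR B M G P Bg Kg \<tau> \<delta> h Q s"
  unfolding stationaryR_def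
proof (intro conjI allI impI feas)
  fix Q' s' assume feas': "feasR B M G P Bg (\<Union>g<G. Kg g) Q' s'"
  define st where "st t = (\<lambda>k. s k + t * (s' k - s k))" for t :: real
  define \<Phi> where "\<Phi> t = objF B M G Kg \<tau> \<delta> h (seg Q Q' t) (st t)" for t
  have "seg Q Q' 0 = Q" "st 0 = s" by (simp_all add: seg_def st_def)
  then have \<Phi>_0: "\<Phi> 0 = objF B M G Kg \<tau> \<delta> h Q s"
    unfolding \<Phi>_def by simp
  have "\<Phi> differentiable (at_right 0)"
    using objF_seg_differentiable feas unfolding \<Phi>_def st_def feasR_def by blast
  then obtain D where "(\<Phi> has_real_derivative D) (at_right 0)"
    by (rule real_differentiableE)
  then have "((\<lambda>t. (\<Phi> t - \<Phi> 0) / (t - 0)) \<longlongrightarrow> D) (at_right 0)"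
    unfolding has_field_derivative_iff .
  then have lim: "((\<lambda>t. (\<Phi> t - objF B M G Kg \<tau> \<delta> h Q s) / t) \<longlongrightarrow> D) (at_right 0)"
    unfolding \<Phi>_0 diff_zero .
  have gap: "((\<lambda>t. (\<Phi> t - surrogate Q (seg Q Q' t) (st t)) / t) \<longlongrightarrow> 0) (at_right 0)"
    using feas feas' unfolding \<Phi>_def st_def feasR_def by (intro objF_sub_surrogate_seg) auto
  have le_gap: "eventually (\<lambda>t. (\<Phi> t - objF B M G Kg \<tau> \<delta> h Q s) / t
      \<le> (\<Phi> t - surrogate Q (seg Q Q' t) (st t)) / t) (at_right 0)"
    using eventually_at_right_unit_interval
  proof eventually_elim
    case (elim t)
    then have "surrogate Q (seg Q Q' t) (st t) \<le> objF B M G Kg \<tau> \<delta> h Q s"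
      unfolding st_def by (intro surrogate_le feasR_seg feas feas') auto
    then show ?case using elim by (intro divide_right_mono) auto
  qed
  have "D \<le> 0" by (rule tendsto_le[OF _ gap lim le_gap]) simp
  with lim show "\<exists>D. ((\<lambda>t. (objF B M G Kg \<tau> \<delta> h (\<lambda>g x y. Q g x y + complex_of_real t * (Q' g x y - Q g x y))
      (\<lambda>k. s k + t * (s' k - s k)) - objF B M G Kg \<tau> \<delta> h Q s) / t) \<longlongrightarrow> D) (at_right 0) \<and> D \<le> 0"
    unfolding \<Phi>_def st_def seg_def by blast
qed

context
  fixes Qs :: "nat \<Rightarrow> nat \<Rightarrow> cmat" and Rs :: "nat \<Rightarrow> nat \<Rightarrow> real"
    and ss :: "nat \<Rightarrow> 'u \<Rightarrow> real" and \<alpha>s :: "nat \<Rightarrow> real"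
  assumes init: "feasQ B M G P Bg (Qs 0)"
    and iter: "\<And>n. optSub B M G P Bg Kg \<tau> \<delta> h (Qs n) (Qs (Suc n)) (Rs (Suc n)) (ss (Suc n)) (\<alpha>s (Suc n))"
begin

lemma iterates_feasQ: "feasQ B M G P Bg (Qs n)"
  using init iter[of "n - 1"] by (cases n) (auto simp: optSub_def dest: feasSub_feasQ)

lemma iterates_value_incseq: "incseq (\<lambda>n. (\<alpha>s (Suc n))\<^sup>2)"
proof (rule incseq_SucI)
  fix n
  have "feasSub B M G P Bg Kg \<tau> \<delta> h (Qs (Suc n)) (Qs (Suc n)) (Rs (Suc n)) (ss (Suc n)) (\<alpha>s (Suc n))"
    using iter[of n] iterates_feasQ unfolding optSub_def by (blast intro: feasSub_recentre)
  then have "\<alpha>s (Suc n) \<le> \<alpha>s (Suc (Suc n))"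
    using iter[of "Suc n"] unfolding optSub_def by blast
  then show "(\<alpha>s (Suc n))\<^sup>2 \<le> (\<alpha>s (Suc (Suc n)))\<^sup>2"
    using optSub_nonneg[OF iter[of n]] by (intro power_mono)
qed

context
  fixes \<sigma> :: "nat \<Rightarrow> nat" and Qlim :: "nat \<Rightarrow> cmat" and slim :: "'u \<Rightarrow> real"
  assumes \<sigma>: "strict_mono \<sigma>"
    and Q_conv: "\<forall>g<G. \<forall>x\<in>idx B M. \<forall>y\<in>idx B M. (\<lambda>n. Qs (\<sigma> n) g x y) \<longlonglongrightarrow> Qlim g x y"
    and s_conv: "\<forall>k\<in>(\<Union>g<G. Kg g). (\<lambda>n. ss (\<sigma> n) k) \<longlonglongrightarrow> slim k"
begin

lemma iterates_limit_feasR: "feasR B M G P Bg (\<Union>g<G. Kg g) Qlim slim"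
proof -
  have "eventually (\<lambda>n. \<forall>k\<in>(\<Union>g<G. Kg g). 0 \<le> ss (\<sigma> n) k \<and> ss (\<sigma> n) k \<le> 1) sequentially"
    using iter by (intro eventually_subseq_Suc[OF \<sigma>]) (auto simp: optSub_def feasSub_def)
  from feasR_limit[OF iterates_feasQ this Q_conv s_conv] show ?thesis .
qed

lemma iterates_limit_surrogate_le:
  assumes feas': "feasR B M G P Bg (\<Union>g<G. Kg g) Q' s'"
  shows "surrogate Qlim Q' s' \<le> objF B M G Kg \<tau> \<delta> h Qlim slim"
proof (rule subseq_limit_le_of_incseq[OF iterates_value_incseq _ _ \<sigma>])
  have feas_lim: "feasQ B M G P Bg Qlim"
    using iterates_limit_feasR unfolding feasR_def by blast
  show "(\<alpha>s (Suc n))\<^sup>2 \<le> objF B M G Kg \<tau> \<delta> h (Qs (Suc n)) (ss (Suc n))" for n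
    using iter[of n] iterates_feasQ[of n] unfolding optSub_def by (blast intro: sq_le_objF_of_feasSub)
  show "surrogate (Qs n) Q' s' \<le> (\<alpha>s (Suc n))\<^sup>2" for n
    using iter feas' by (rule surrogate_le_optSub)
  show "(\<lambda>n. objF B M G Kg \<tau> \<delta> h (Qs (\<sigma> n)) (ss (\<sigma> n))) \<longlonglongrightarrow> objF B M G Kg \<tau> \<delta> h Qlim slim"
    using feas_lim Q_conv s_conv by (rule objF_tendsto)
  show "(\<lambda>n. surrogate (Qs (\<sigma> n)) Q' s') \<longlonglongrightarrow> surrogate Qlim Q' s'"
    using feas_lim Q_conv by (rule surrogate_tendsto)
qed

end

end

end

theorem proposition1:
  fixes B M G :: nat
    and P :: "nat \<Rightarrow> real"
    and Bg :: "nat \<Rightarrow> nat set"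
    and Kg :: "nat \<Rightarrow> 'u set"
    and \<tau> :: "nat \<Rightarrow> real"
    and \<delta> :: real
    and h :: "'u \<Rightarrow> cvec"
    and Qs :: "nat \<Rightarrow> nat \<Rightarrow> cmat"
    and Rs :: "nat \<Rightarrow> nat \<Rightarrow> real"
    and ss :: "nat \<Rightarrow> 'u \<Rightarrow> real"
    and \<alpha>s :: "nat \<Rightarrow> real"
    and Qlim :: "nat \<Rightarrow> cmat"
    and slim :: "'u \<Rightarrow> real"
  assumes delta_pos: "\<delta> > 0"
    and G_pos: "G \<ge> 1"
    and P_nonneg: "\<forall>b<B. P b \<ge> 0"
    and Bg_sub: "\<forall>g<G. Bg g \<subseteq> {0..<B}"
    and tau_pos: "\<forall>g<G. \<tau> g > 0"
    and Kg_fin: "\<forall>g<G. finite (Kg g)"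
    and Kg_ne: "\<forall>g<G. Kg g \<noteq> {}"
    and Kg_disj: "\<forall>g<G. \<forall>g'<G. g \<noteq> g' \<longrightarrow> Kg g \<inter> Kg g' = {}"
    and init: "feasQ B M G P Bg (Qs 0)"
    and iter: "\<forall>n. optSub B M G P Bg Kg \<tau> \<delta> h (Qs n)
                     (Qs (Suc n)) (Rs (Suc n)) (ss (Suc n)) (\<alpha>s (Suc n))"
    and lim: "limit_point B M G (\<Union>g<G. Kg g) Qs ss Qlim slim"
  shows "stationaryR B M G P Bg Kg \<tau> \<delta> h Qlim slim"
proof -
  interpret multicast_network B M G P Bg Kg \<tau> \<delta> h
    using delta_pos G_pos tau_pos Kg_fin Kg_ne by unfold_locales auto
  have step: "optSub B M G P Bg Kg \<tau> \<delta> h (Qs n) (Qs (Suc n)) (Rs (Suc n)) (ss (Suc n)) (\<alpha>s (Suc n))" for n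
    using iter by blast
  obtain \<sigma> where \<sigma>: "strict_mono \<sigma>"
    and Q_conv: "\<forall>g<G. \<forall>x\<in>idx B M. \<forall>y\<in>idx B M. (\<lambda>n. Qs (\<sigma> n) g x y) \<longlonglongrightarrow> Qlim g x y"
    and s_conv: "\<forall>k\<in>(\<Union>g<G. Kg g). (\<lambda>n. ss (\<sigma> n) k) \<longlonglongrightarrow> slim k"
    using lim unfolding limit_point_def by blast
  show ?thesis
  proof (rule stationaryR_of_surrogate_le)
    show "feasR B M G P Bg (\<Union>g<G. Kg g) Qlim slim"
      using init step \<sigma> Q_conv s_conv by (rule iterates_limit_feasR)
    show "surrogate Qlim Q' s' \<le> objF B M G Kg \<tau> \<delta> h Qlim slim"
      if "feasR B M G P Bg (\<Union>g<G. Kg g) Q' s'" for Q' s'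
      using init step \<sigma> Q_conv s_conv that by (rule iterates_limit_surrogate_le)
  qed
qed

end
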